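(* Let $\ell,d_1,\dots,d_\ell\in\mathbb N$, let $\mathcal L=\{-\ell,\dots,-1,1,\dots,\ell\}$, set $e_i=\operatorname{sgn}(i)d_{|i|}$ for $i\in\mathcal L$, and for $S\subseteq\mathcal L$ put $e_S=\sum_{i\in S}e_i$. Fix $\beta\in\mathbb N$ and $b_1,\dots,b_\beta\in\mathbb N$. Then $$\sum_{S_1,\dots,S_\beta}\Bigl(\sum_{i=1}^\beta e_{S_i}\Bigr)^2$$ is an integral multiple of $\sum_{i\in\mathcal L}e_i^2$, where the outer sum runs over all tuples $(S_1,\dots,S_\beta)$ of subsets $S_i\subseteq\mathcal L$ with $|S_i|=b_i$. *)

theory Defs
  imports "HOL-Library.FuncSet"
begin

definition signedIdx :: "nat \<Rightarrow> int set" where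
  "signedIdx l = {-int l..-1} \<union> {1..int l}"

definition eval_e :: "(nat \<Rightarrow> nat) \<Rightarrow> int \<Rightarrow> int" where
  "eval_e d i = sgn i * int (d (nat \<bar>i\<bar>))"

definition eval_eS :: "(nat \<Rightarrow> nat) \<Rightarrow> int set \<Rightarrow> int" where
  "eval_eS d S = (\<Sum>i\<in>S. eval_e d i)"

end

theory Submission
  imports Defs
begin

text \<open>
  In the family of all b-subsets of a finite set L every point lies in the same number r of
  members and every pair of distinct points in the same number s. Hence, for any weights w,
  the sum of (\<Sum>i\<in>T. w i)^2 over the family is (r - s) \<Sum>i\<in>L. (w i)^2 + s (\<Sum>i\<in>L. w i)^2,
  and the sum of \<Sum>i\<in>T. w i is r \<Sum>i\<in>L. w i. Since e is odd, \<Sum>i\<in>L. e i = 0, so over each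
  family the e_S sum to 0 and the squares e_S^2 sum to a multiple of \<Sum>i\<in>L. (e i)^2. Expanding
  the square of e_S1 + ... + e_S\<beta> and summing over all tuples, the cross terms factor through
  the vanishing sums, and induction on \<beta> finishes the proof.
\<close>

lemma n_supersets:
  assumes "finite L" "K \<subseteq> L"
  shows "card {T. T \<subseteq> L \<and> card T = b \<and> K \<subseteq> T} =
    (if card K \<le> b then (card L - card K) choose (b - card K) else 0)"
proof (cases "card K \<le> b")
  case True
  have fK: "finite K" using assms finite_subset by blast
  have "{T. T \<subseteq> L \<and> card T = b \<and> K \<subseteq> T} =
     (\<lambda>U. U \<union> K) ` {U. U \<subseteq> L - K \<and> card U = b - card K}"
  proof (rule set_eqI, rule iffI)
    fix T assume "T \<in> {T. T \<subseteq> L \<and> card T = b \<and> K \<subseteq> T}"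
    then have "T - K \<subseteq> L - K" "card (T - K) = b - card K" "T = (T - K) \<union> K"
      using card_Diff_subset[OF fK] by auto
    then show "T \<in> (\<lambda>U. U \<union> K) ` {U. U \<subseteq> L - K \<and> card U = b - card K}" by blast
  next
    fix T assume "T \<in> (\<lambda>U. U \<union> K) ` {U. U \<subseteq> L - K \<and> card U = b - card K}"
    then obtain U where U: "U \<subseteq> L - K" "card U = b - card K" "T = U \<union> K" by blast
    moreover have "finite U" using U(1) assms(1) finite_subset by blast
    moreover have "U \<inter> K = {}" using U(1) by blast
    ultimately have "card T = card U + card K"
      using fK U(3) by (simp add: card_Un_disjoint)
    then show "T \<in> {T. T \<subseteq> L \<and> card T = b \<and> K \<subseteq> T}" using U True assms by auto
  qed
  moreover have "inj_on (\<lambda>U. U \<union> K) {U. U \<subseteq> L - K \<and> card U = b - card K}"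
    by (rule inj_onI) blast
  ultimately have "card {T. T \<subseteq> L \<and> card T = b \<and> K \<subseteq> T} = card (L - K) choose (b - card K)"
    using assms by (simp add: card_image n_subsets)
  then show ?thesis using True assms fK by (simp add: card_Diff_subset)
next
  case False
  have "{T. T \<subseteq> L \<and> card T = b \<and> K \<subseteq> T} = {}"
    using False assms(1) card_mono finite_subset by blast
  then show ?thesis using False by (simp only: card.empty if_False)
qed

lemma sum_sum_over_members:
  fixes g :: "'a \<Rightarrow> 'b::comm_semiring_1"
  assumes "finite L" "finite A" "\<forall>T\<in>A. T \<subseteq> L"
  shows "(\<Sum>T\<in>A. sum g T) = (\<Sum>i\<in>L. of_nat (card {T\<in>A. i \<in> T}) * g i)"
proof -
  have "sum g T = (\<Sum>i\<in>L. if i \<in> T then g i else 0)" if "T \<in> A" for T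
    using assms that sum.inter_restrict[OF assms(1), of g T] by (simp add: Int_absorb1)
  then have "(\<Sum>T\<in>A. sum g T) = (\<Sum>T\<in>A. \<Sum>i\<in>L. if i \<in> T then g i else 0)"
    by (rule sum.cong[OF refl])
  also have "\<dots> = (\<Sum>i\<in>L. \<Sum>T\<in>A. if i \<in> T then g i else 0)"
    by (rule sum.swap)
  also have "\<dots> = (\<Sum>i\<in>L. of_nat (card {T\<in>A. i \<in> T}) * g i)"
    using assms(2) by (simp add: sum.inter_filter[symmetric] mult.commute)
  finally show ?thesis .
qed

lemma sum_square_sum_over_members:
  fixes w :: "'a \<Rightarrow> 'b::comm_ring_1"
  assumes "finite L" "finite A" "\<forall>T\<in>A. T \<subseteq> L"
  shows "(\<Sum>T\<in>A. (sum w T)^2)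
    = (\<Sum>i\<in>L. \<Sum>k\<in>L. of_nat (card {T\<in>A. i \<in> T \<and> k \<in> T}) * (w i * w k))"
proof -
  have "(sum w T)^2 = (\<Sum>i\<in>L. \<Sum>k\<in>L. if i \<in> T \<and> k \<in> T then w i * w k else 0)"
    if "T \<in> A" for T
  proof -
    have restrict: "sum w T = (\<Sum>i\<in>L. if i \<in> T then w i else 0)"
      using assms that sum.inter_restrict[OF assms(1), of w T] by (simp add: Int_absorb1)
    show ?thesis
      unfolding restrict power2_eq_square sum_product by (intro sum.cong refl) auto
  qed
  then have "(\<Sum>T\<in>A. (sum w T)^2)
      = (\<Sum>T\<in>A. \<Sum>i\<in>L. \<Sum>k\<in>L. if i \<in> T \<and> k \<in> T then w i * w k else 0)"
    by (rule sum.cong[OF refl])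
  also have "\<dots> = (\<Sum>i\<in>L. \<Sum>k\<in>L. \<Sum>T\<in>A. if i \<in> T \<and> k \<in> T then w i * w k else 0)"
    by (simp only: sum.swap[of _ A])
  also have "\<dots> = (\<Sum>i\<in>L. \<Sum>k\<in>L. of_nat (card {T\<in>A. i \<in> T \<and> k \<in> T}) * (w i * w k))"
    using assms(2) by (simp add: sum.inter_filter[symmetric] mult.commute)
  finally show ?thesis .
qed

lemma sum_square_sum_over_design:
  fixes w :: "'a \<Rightarrow> 'b::comm_ring_1"
  assumes "finite L" "finite A" "\<forall>T\<in>A. T \<subseteq> L"
    and r: "\<And>i. i \<in> L \<Longrightarrow> card {T\<in>A. i \<in> T} = r"
    and s: "\<And>i k. i \<in> L \<Longrightarrow> k \<in> L \<Longrightarrow> i \<noteq> k \<Longrightarrow> card {T\<in>A. i \<in> T \<and> k \<in> T} = s"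
  shows "(\<Sum>T\<in>A. (sum w T)^2) = (of_nat r - of_nat s) * (\<Sum>i\<in>L. (w i)^2) + of_nat s * (sum w L)^2"
proof -
  have "(\<Sum>k\<in>L. of_nat (card {T\<in>A. i \<in> T \<and> k \<in> T}) * (w i * w k))
      = (of_nat r - of_nat s) * (w i)^2 + of_nat s * w i * sum w L" if i: "i \<in> L" for i
  proof -
    have "(\<Sum>k\<in>L. of_nat (card {T\<in>A. i \<in> T \<and> k \<in> T}) * (w i * w k))
        = (\<Sum>k\<in>L. of_nat s * w i * w k + (if k = i then (of_nat r - of_nat s) * (w i * w k) else 0))"
      using r s i by (intro sum.cong refl) (auto simp: algebra_simps)
    also have "\<dots> = (of_nat r - of_nat s) * (w i)^2 + of_nat s * w i * sum w L"
      using i assms(1) by (simp add: sum.distrib sum_distrib_left power2_eq_square algebra_simps)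
    finally show ?thesis .
  qed
  then have "(\<Sum>T\<in>A. (sum w T)^2)
      = (\<Sum>i\<in>L. (of_nat r - of_nat s) * (w i)^2 + of_nat s * w i * sum w L)"
    using assms(1-3) by (simp add: sum_square_sum_over_members)
  moreover have "(\<Sum>i\<in>L. of_nat s * w i * sum w L) = of_nat s * (sum w L)^2"
    by (simp add: power2_eq_square mult.assoc flip: sum_distrib_right sum_distrib_left)
  ultimately show ?thesis
    by (simp add: sum.distrib sum_distrib_left)
qed

lemma sum_sum_subsets_of_card:
  fixes w :: "'a \<Rightarrow> 'b::comm_semiring_1"
  assumes "finite L"
  shows "(\<Sum>T | T \<subseteq> L \<and> card T = b. sum w T)
    = of_nat (if 1 \<le> b then (card L - 1) choose (b - 1) else 0) * sum w L"
proof -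
  have "card {T\<in>{T. T \<subseteq> L \<and> card T = b}. i \<in> T} = (if 1 \<le> b then (card L - 1) choose (b - 1) else 0)"
    if "i \<in> L" for i
    using n_supersets[OF assms, of "{i}" b] that by (simp add: conj_assoc)
  then show ?thesis
    using assms by (simp add: sum_sum_over_members sum_distrib_left)
qed

lemma sum_square_sum_subsets_of_card:
  fixes w :: "'a \<Rightarrow> 'b::comm_ring_1" and b :: nat
  assumes "finite L"
  defines "r \<equiv> if 1 \<le> b then (card L - 1) choose (b - 1) else 0"
    and "s \<equiv> if 2 \<le> b then (card L - 2) choose (b - 2) else 0"
  shows "(\<Sum>T | T \<subseteq> L \<and> card T = b. (sum w T)^2)
    = (of_nat r - of_nat s) * (\<Sum>i\<in>L. (w i)^2) + of_nat s * (sum w L)^2"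
proof (rule sum_square_sum_over_design)
  fix i k assume "i \<in> L" "k \<in> L" "i \<noteq> k"
  moreover from \<open>i \<noteq> k\<close> have "card {i, k} = 2" by simp
  ultimately show "card {T\<in>{T. T \<subseteq> L \<and> card T = b}. i \<in> T \<and> k \<in> T} = s"
    using n_supersets[OF assms(1), of "{i, k}" b] by (simp only: s_def) (simp add: conj_assoc)
qed (use assms n_supersets[OF assms(1), of "{_}" b] in \<open>auto simp: r_def conj_assoc\<close>)

lemma sum_sum_square_add:
  fixes f :: "'a \<Rightarrow> 'c::comm_ring_1"
  shows "(\<Sum>y\<in>A. \<Sum>x\<in>B. (f y + g x)^2)
    = of_nat (card B) * (\<Sum>y\<in>A. (f y)^2) + 2 * sum f A * sum g B
      + of_nat (card A) * (\<Sum>x\<in>B. (g x)^2)"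
  by (simp add: power2_sum sum.distrib sum_distrib_left sum_distrib_right algebra_simps)

lemma sum_PiE_insert:
  assumes "a \<notin> J"
  shows "(\<Sum>S\<in>(\<Pi>\<^sub>E j\<in>insert a J. A j). F S)
    = (\<Sum>y\<in>A a. \<Sum>S\<in>(\<Pi>\<^sub>E j\<in>J. A j). F (S(a := y)))"
  unfolding PiE_insert_eq
  by (subst sum.reindex[OF inj_combinator[OF assms]]) (simp add: sum.cartesian_product case_prod_unfold)

lemma dvd_sum_PiE_square_sum:
  fixes f :: "'j \<Rightarrow> 'a \<Rightarrow> 'b::comm_ring_1"
  assumes "finite J"
    and "\<And>j. j \<in> J \<Longrightarrow> sum (f j) (A j) = 0"
    and "\<And>j. j \<in> J \<Longrightarrow> q dvd (\<Sum>y\<in>A j. (f j y)^2)"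
  shows "q dvd (\<Sum>S\<in>(\<Pi>\<^sub>E j\<in>J. A j). (\<Sum>j\<in>J. f j (S j))^2)"
  using assms
proof (induction J rule: finite_induct)
  case empty
  then show ?case by simp
next
  case (insert a J)
  have "(\<Sum>j\<in>insert a J. f j ((S(a := y)) j)) = f a y + (\<Sum>j\<in>J. f j (S j))" for S y
    using insert.hyps by (auto intro!: sum.cong)
  then have "(\<Sum>S\<in>(\<Pi>\<^sub>E j\<in>insert a J. A j). (\<Sum>j\<in>insert a J. f j (S j))^2)
      = (\<Sum>y\<in>A a. \<Sum>S\<in>(\<Pi>\<^sub>E j\<in>J. A j). (f a y + (\<Sum>j\<in>J. f j (S j)))^2)"
    using insert.hyps by (simp add: sum_PiE_insert)
  also have "\<dots> = of_nat (card (\<Pi>\<^sub>E j\<in>J. A j)) * (\<Sum>y\<in>A a. (f a y)^2)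
      + of_nat (card (A a)) * (\<Sum>S\<in>(\<Pi>\<^sub>E j\<in>J. A j). (\<Sum>j\<in>J. f j (S j))^2)"
    using insert.prems by (simp add: sum_sum_square_add)
  finally show ?case
    using insert by simp
qed

lemma sum_odd_function_eq_0:
  fixes g :: "'a::group_add \<Rightarrow> 'b::linordered_ab_group_add"
  assumes "uminus ` L = L" and "\<And>x. g (- x) = - g x"
  shows "sum g L = 0"
proof -
  \<comment> \<open>The order on the codomain excludes 2-torsion, so x = - x forces x = 0.\<close>
  have "sum g L = sum (g \<circ> uminus) L"
    by (subst sum.reindex[symmetric]) (simp_all add: assms(1))
  then have "sum g L = - sum g L"
    by (simp add: assms(2) sum_negf)
  then show ?thesis
    by (simp add: equal_neg_zero)
qed

lemma sum_eval_e_signedIdx: "sum (eval_e d) (signedIdx l) = 0"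
proof (rule sum_odd_function_eq_0)
  show "uminus ` signedIdx l = signedIdx l"
    by (force simp: signedIdx_def image_iff intro: bexI[of _ "- _"])
qed (simp add: eval_e_def sgn_minus)

theorem lemma6p5:
  fixes l \<beta> :: nat and d b :: "nat \<Rightarrow> nat"
  shows "(\<Sum>i\<in>signedIdx l. (eval_e d i)^2) dvd
    (\<Sum>S\<in>(\<Pi>\<^sub>E j\<in>{1..\<beta>}. {T. T \<subseteq> signedIdx l \<and> card T = b j}).
        (\<Sum>j=1..\<beta>. eval_eS d (S j))^2)"
proof (rule dvd_sum_PiE_square_sum[where f = "\<lambda>_. eval_eS d"])
  have fin: "finite (signedIdx l)"
    by (simp add: signedIdx_def)
  fix j
  show "sum (eval_eS d) {T. T \<subseteq> signedIdx l \<and> card T = b j} = 0"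
    using sum_sum_subsets_of_card[OF fin, of "eval_e d" "b j"]
    by (simp add: eval_eS_def sum_eval_e_signedIdx)
  show "(\<Sum>i\<in>signedIdx l. (eval_e d i)^2) dvd
      (\<Sum>T\<in>{T. T \<subseteq> signedIdx l \<and> card T = b j}. (eval_eS d T)^2)"
    using sum_square_sum_subsets_of_card[OF fin, of "eval_e d" "b j"]
    by (simp add: eval_eS_def sum_eval_e_signedIdx)
qed simp

end
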